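(* Let $k \geq 2$ be an integer and let $G$ be a $k$-connected $(K_2 \cup kK_1)$-free graph. Then $\alpha(G) \leq \frac{|V(G)|}{2}$ if and only if $G$ is $1$-tough. Moreover, if $G$ is $(k+1)$-connected and $(K_2 \cup kK_1)$-free, then $\alpha(G) < \frac{|V(G)|}{2}$ if and only if $t(G) > 1$.
   Context: All graphs are finite, undirected and simple. $\alpha(G)$ denotes the independence number and $\omega(H)$ the number of components of a graph $H$. For graphs $R, R'$, $R \cup R'$ is their disjoint union and $kR$ is the disjoint union of $k$ copies of $R$; $K_n$ is the complete graph on $n$ vertices. A graph $G$ is $R$-free if it contains no induced subgraph isomorphic to $R$. The toughness $t(G)$ is $\min\{|S|/\omega(G-S) : S \subset V(G),\ \omega(G-S) \geq 2\}$, or $t(G)=\infty$ if $G$ is complete; $G$ is $1$-tough if $t(G) \geq 1$. *)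

theory Defs
  imports Complex_Main "HOL-Library.Extended_Real"
begin

definition simple_graph :: "'a set \<Rightarrow> ('a \<Rightarrow> 'a \<Rightarrow> bool) \<Rightarrow> bool" where
  "simple_graph V E \<longleftrightarrow> finite V \<and> (\<forall>x y. E x y \<longrightarrow> x \<in> V \<and> y \<in> V)
     \<and> (\<forall>x y. E x y \<longrightarrow> E y x) \<and> (\<forall>x. \<not> E x x)"

definition independent_set :: "'a set \<Rightarrow> ('a \<Rightarrow> 'a \<Rightarrow> bool) \<Rightarrow> 'a set \<Rightarrow> bool" where
  "independent_set V E S \<longleftrightarrow> S \<subseteq> V \<and> (\<forall>x\<in>S. \<forall>y\<in>S. \<not> E x y)"

definition indep_number :: "'a set \<Rightarrow> ('a \<Rightarrow> 'a \<Rightarrow> bool) \<Rightarrow> nat" where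
  "indep_number V E = Max (card ` {S. independent_set V E S})"

definition conn_rel :: "'a set \<Rightarrow> ('a \<Rightarrow> 'a \<Rightarrow> bool) \<Rightarrow> ('a \<times> 'a) set" where
  "conn_rel A E = {(x, y). x \<in> A \<and> y \<in> A \<and> (x, y) \<in> ({(a, b). a \<in> A \<and> b \<in> A \<and> E a b})\<^sup>*}"

definition num_components :: "'a set \<Rightarrow> ('a \<Rightarrow> 'a \<Rightarrow> bool) \<Rightarrow> nat" where
  "num_components A E = card (A // conn_rel A E)"

definition complete_graph :: "'a set \<Rightarrow> ('a \<Rightarrow> 'a \<Rightarrow> bool) \<Rightarrow> bool" where
  "complete_graph V E \<longleftrightarrow> (\<forall>x\<in>V. \<forall>y\<in>V. x \<noteq> y \<longrightarrow> E x y)"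

definition k_connected :: "nat \<Rightarrow> 'a set \<Rightarrow> ('a \<Rightarrow> 'a \<Rightarrow> bool) \<Rightarrow> bool" where
  "k_connected k V E \<longleftrightarrow> card V > k \<and>
     (\<forall>S. S \<subseteq> V \<and> card S < k \<longrightarrow> num_components (V - S) E = 1)"

definition toughness :: "'a set \<Rightarrow> ('a \<Rightarrow> 'a \<Rightarrow> bool) \<Rightarrow> ereal" where
  "toughness V E = (if complete_graph V E then \<infinity> else
     ereal (Min {real (card S) / real (num_components (V - S) E) | S.
                  S \<subset> V \<and> num_components (V - S) E \<ge> 2}))"

definition K2_kK1_free :: "nat \<Rightarrow> 'a set \<Rightarrow> ('a \<Rightarrow> 'a \<Rightarrow> bool) \<Rightarrow> bool" where
  "K2_kK1_free k V E \<longleftrightarrow> \<not> (\<exists>u v I. u \<in> V \<and> v \<in> V \<and> E u v \<and> I \<subseteq> V \<and> card I = k \<and>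
      u \<notin> I \<and> v \<notin> I \<and> independent_set V E I \<and> (\<forall>w\<in>I. \<not> E u w \<and> \<not> E v w))"

end

theory Submission
  imports Defs
begin

text \<open>If G - S has more than k components in a (K_2 \<union> kK_1)-free graph, then G - S has
  no edge: an edge together with one vertex from each of k other components would induce
  K_2 \<union> kK_1. In a k-connected graph every separating set S has |S| \<ge> k, so a set S with
  \<omega>(G - S) > |S| leaves an independent set V - S with more than n/2 vertices; in the
  (k+1)-connected case \<omega>(G - S) \<ge> |S| \<ge> k + 1 gives one with at least n/2 vertices.
  Conversely, in any graph, deleting the complement of a maximum independent set I leaves |I|
  isolated vertices, so t(G) \<ge> 1 forces |I| \<le> n - |I|, and t(G) > 1 the strict inequality.\<close>

lemma conn_rel_equiv:
  assumes "\<And>x y. E x y \<Longrightarrow> E y x"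
  shows "equiv A (conn_rel A E)"
proof (rule equivI)
  let ?R = "{(a, b). a \<in> A \<and> b \<in> A \<and> E a b}"
  have "sym (?R\<^sup>*)" by (rule sym_rtrancl) (auto simp: sym_def intro: assms)
  then show "sym (conn_rel A E)" by (auto simp: conn_rel_def sym_def)
  show "conn_rel A E \<subseteq> A \<times> A" "refl_on A (conn_rel A E)"
    by (auto simp: conn_rel_def refl_on_def)
  show "trans (conn_rel A E)" unfolding conn_rel_def trans_def
    by (auto intro: rtrancl_trans)
qed

lemma conn_rel_edge: "x \<in> A \<Longrightarrow> y \<in> A \<Longrightarrow> E x y \<Longrightarrow> (x, y) \<in> conn_rel A E"
  by (auto simp: conn_rel_def)

lemma num_components_edgeless:
  assumes "\<forall>x\<in>A. \<forall>y\<in>A. \<not> E x y"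
  shows "num_components A E = card A"
proof -
  have no_edges: "{(a, b). a \<in> A \<and> b \<in> A \<and> E a b} = {}" using assms by auto
  have "conn_rel A E = Id_on A" unfolding conn_rel_def no_edges by (auto simp: Id_on_def)
  then have "A // conn_rel A E = (\<lambda>a. {a}) ` A"
    by (auto simp: quotient_def)
  then show ?thesis
    unfolding num_components_def by (simp add: card_image)
qed

lemma obtain_transversal_avoiding_class:
  assumes R: "equiv A R" and "x \<in> A" and "n < card (A // R)"
  obtains X where "X \<subseteq> A" "card X = n" "\<forall>a\<in>X. (x, a) \<notin> R"
    "\<forall>a\<in>X. \<forall>b\<in>X. (a, b) \<in> R \<longrightarrow> a = b"
proof -
  have "finite (A // R)" using assms(3) card.infinite by force
  moreover have "R``{x} \<in> A // R" using \<open>x \<in> A\<close> by (rule quotientI)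
  ultimately have "n \<le> card (A // R - {R``{x}})" using assms(3) by simp
  then obtain Q where Q: "Q \<subseteq> A // R - {R``{x}}" "card Q = n"
    by (meson obtain_subset_with_card_n)
  define rep where "rep C = (SOME a. a \<in> A \<and> C = R``{a})" for C
  have rep: "rep C \<in> A \<and> C = R``{rep C}" if C: "C \<in> A // R" for C
  proof -
    obtain a where "a \<in> A \<and> C = R``{a}" using C by (auto elim: quotientE)
    then show ?thesis unfolding rep_def by (rule someI)
  qed
  have same_class: "C = D" if "C \<in> Q" "D \<in> Q" "(rep C, rep D) \<in> R" for C D
  proof -
    have "C \<in> A // R" "D \<in> A // R" using that(1,2) Q(1) by auto
    then show ?thesis using rep equiv_class_eq[OF R that(3)] by metis
  qed
  show thesis
  proof
    show "rep ` Q \<subseteq> A" using Q(1) rep by auto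
    have "inj_on rep Q"
    proof (rule inj_onI)
      fix C D assume "C \<in> Q" "D \<in> Q" "rep C = rep D"
      then show "C = D" using rep Q(1) by (metis DiffD1 subsetD)
    qed
    then show "card (rep ` Q) = n" using Q(2) by (simp add: card_image)
    show "\<forall>a\<in>rep ` Q. (x, a) \<notin> R"
    proof
      fix a assume "a \<in> rep ` Q"
      then obtain C where "C \<in> Q" "a = rep C" by blast
      then have "C \<in> A // R" "C \<noteq> R``{x}" "C = R``{a}" using Q(1) rep by auto
      then show "(x, a) \<notin> R" using equiv_class_eq[OF R] by metis
    qed
    show "\<forall>a\<in>rep ` Q. \<forall>b\<in>rep ` Q. (a, b) \<in> R \<longrightarrow> a = b"
      using same_class by auto
  qed
qed

lemma edgeless_if_many_components:
  assumes G: "simple_graph V E" and free: "K2_kK1_free k V E" and "A \<subseteq> V"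
    and many: "k < num_components A E"
  shows "\<forall>x\<in>A. \<forall>y\<in>A. \<not> E x y"
proof (intro ballI notI)
  fix u v assume "u \<in> A" "v \<in> A" "E u v"
  have irrefl: "\<And>a. \<not> E a a" using G by (simp add: simple_graph_def)
  let ?R = "conn_rel A E"
  have R: "equiv A ?R" using G by (intro conn_rel_equiv) (simp add: simple_graph_def)
  obtain I where I: "I \<subseteq> A" "card I = k" "\<forall>w\<in>I. (u, w) \<notin> ?R"
    "\<forall>a\<in>I. \<forall>b\<in>I. (a, b) \<in> ?R \<longrightarrow> a = b"
    using obtain_transversal_avoiding_class[OF R \<open>u \<in> A\<close>] many
    unfolding num_components_def by blast
  have uv: "(u, v) \<in> ?R" using \<open>u \<in> A\<close> \<open>v \<in> A\<close> \<open>E u v\<close> by (rule conn_rel_edge)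
  have vw: "(v, w) \<notin> ?R" if "w \<in> I" for w
    using that I(3) uv R by (meson equivE transD)
  have "u \<notin> I" "v \<notin> I"
    using I(3) uv \<open>u \<in> A\<close> R by (auto simp: equiv_def refl_on_def)
  moreover have "independent_set V E I"
    using I \<open>A \<subseteq> V\<close> irrefl conn_rel_edge[of _ A _ E]
    unfolding independent_set_def by (metis subset_trans subsetD)
  moreover have "\<forall>w\<in>I. \<not> E u w \<and> \<not> E v w"
    using I(1,3) vw \<open>u \<in> A\<close> \<open>v \<in> A\<close> conn_rel_edge[of _ A _ E] by blast
  ultimately show False
    using free I(1,2) \<open>A \<subseteq> V\<close> \<open>u \<in> A\<close> \<open>v \<in> A\<close> \<open>E u v\<close>
    unfolding K2_kK1_free_def by blast
qed

lemma finite_independent_set_cards: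
  assumes "simple_graph V E"
  shows "finite (card ` {S. independent_set V E S})"
proof -
  have "card ` {S. independent_set V E S} \<subseteq> {..card V}"
    using assms by (auto simp: simple_graph_def independent_set_def intro: card_mono)
  then show ?thesis using finite_subset by blast
qed

lemma card_le_indep_number:
  assumes "simple_graph V E" "independent_set V E S"
  shows "card S \<le> indep_number V E"
  unfolding indep_number_def
  using finite_independent_set_cards[OF assms(1)] assms(2) by (intro Max_ge) auto

lemma obtain_maximum_independent_set:
  assumes "simple_graph V E"
  obtains I where "independent_set V E I" "card I = indep_number V E"
proof -
  have "independent_set V E {}" by (simp add: independent_set_def)
  then have "indep_number V E \<in> card ` {S. independent_set V E S}"
    unfolding indep_number_def using finite_independent_set_cards[OF assms]
    by (intro Max_in) auto
  then show thesis using that by auto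
qed

definition separating_sets :: "'a set \<Rightarrow> ('a \<Rightarrow> 'a \<Rightarrow> bool) \<Rightarrow> 'a set set" where
  "separating_sets V E = {S. S \<subset> V \<and> 2 \<le> num_components (V - S) E}"

lemma toughness_eq_Min:
  "\<not> complete_graph V E \<Longrightarrow> toughness V E =
     ereal (Min ((\<lambda>S. real (card S) / real (num_components (V - S) E)) ` separating_sets V E))"
  unfolding toughness_def separating_sets_def by (simp add: setcompr_eq_image)

lemma finite_separating_sets: "finite V \<Longrightarrow> finite (separating_sets V E)"
  unfolding separating_sets_def by (rule finite_subset[of _ "Pow V"]) auto

lemma separating_sets_nonempty:
  assumes "simple_graph V E" and "\<not> complete_graph V E"
  shows "separating_sets V E \<noteq> {}"
proof -
  obtain x y where xy: "x \<in> V" "y \<in> V" "x \<noteq> y" "\<not> E x y"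
    using assms(2) unfolding complete_graph_def by blast
  then have "\<forall>a\<in>{x, y}. \<forall>b\<in>{x, y}. \<not> E a b"
    using assms(1) unfolding simple_graph_def by blast
  then have "num_components {x, y} E = 2"
    using \<open>x \<noteq> y\<close> by (simp add: num_components_edgeless)
  moreover have "V - (V - {x, y}) = {x, y}" "V - {x, y} \<subset> V" using xy by auto
  ultimately have "V - {x, y} \<in> separating_sets V E"
    unfolding separating_sets_def by simp
  then show ?thesis by blast
qed

lemma toughness_ge_iff:
  assumes "simple_graph V E" and "\<not> complete_graph V E"
  shows "ereal c \<le> toughness V E \<longleftrightarrow>
    (\<forall>S\<in>separating_sets V E. c * real (num_components (V - S) E) \<le> real (card S))"
  (is "_ \<longleftrightarrow> ?rhs")
proof -
  have fin: "finite (separating_sets V E)"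
    using assms(1) by (simp add: simple_graph_def finite_separating_sets)
  have "ereal c \<le> toughness V E \<longleftrightarrow>
      (\<forall>S\<in>separating_sets V E. c \<le> real (card S) / real (num_components (V - S) E))"
    using fin separating_sets_nonempty[OF assms] by (simp add: toughness_eq_Min[OF assms(2)])
  also have "\<dots> \<longleftrightarrow> ?rhs"
    by (intro ball_cong refl) (simp add: separating_sets_def pos_le_divide_eq)
  finally show ?thesis .
qed

lemma toughness_gt_iff:
  assumes "simple_graph V E" and "\<not> complete_graph V E"
  shows "ereal c < toughness V E \<longleftrightarrow>
    (\<forall>S\<in>separating_sets V E. c * real (num_components (V - S) E) < real (card S))"
  (is "_ \<longleftrightarrow> ?rhs")
proof -
  have fin: "finite (separating_sets V E)"
    using assms(1) by (simp add: simple_graph_def finite_separating_sets)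
  have "ereal c < toughness V E \<longleftrightarrow>
      (\<forall>S\<in>separating_sets V E. c < real (card S) / real (num_components (V - S) E))"
    using fin separating_sets_nonempty[OF assms] by (simp add: toughness_eq_Min[OF assms(2)])
  also have "\<dots> \<longleftrightarrow> ?rhs"
    by (intro ball_cong refl) (simp add: separating_sets_def pos_less_divide_eq)
  finally show ?thesis .
qed

lemma k_connected_le_card_separating:
  assumes "k_connected k V E" and "S \<in> separating_sets V E"
  shows "k \<le> card S"
  using assms unfolding k_connected_def separating_sets_def by force

lemma separating_set_with_many_components:
  assumes G: "simple_graph V E" and free: "K2_kK1_free k V E"
    and S: "S \<in> separating_sets V E" and many: "k < num_components (V - S) E"
  shows "num_components (V - S) E = card (V - S)" "card (V - S) \<le> indep_number V E"
proof -
  have edgeless: "\<forall>x\<in>V - S. \<forall>y\<in>V - S. \<not> E x y"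
    using edgeless_if_many_components[OF G free _ many] by blast
  then show "num_components (V - S) E = card (V - S)" by (rule num_components_edgeless)
  have "independent_set V E (V - S)" using edgeless by (auto simp: independent_set_def)
  then show "card (V - S) \<le> indep_number V E" by (rule card_le_indep_number[OF G])
qed

lemma card_split_separating:
  assumes "simple_graph V E" and "S \<in> separating_sets V E"
  shows "card V = card S + card (V - S)"
  using assms card_Int_Diff[of V S] Int_absorb1[of S V]
  by (auto simp: simple_graph_def separating_sets_def)

lemma obtain_separating_set_of_indep_number:
  assumes G: "simple_graph V E" and "2 \<le> indep_number V E"
  obtains S where "\<not> complete_graph V E" "S \<in> separating_sets V E"
    "num_components (V - S) E = indep_number V E" "card V = card S + indep_number V E"
proof -
  obtain I where I: "independent_set V E I" "card I = indep_number V E"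
    by (rule obtain_maximum_independent_set[OF G])
  have "I \<subseteq> V" "V - (V - I) = I" using I(1) by (auto simp: independent_set_def)
  have "finite I" "\<not> card I \<le> Suc 0"
    using \<open>2 \<le> indep_number V E\<close> I(2) card.infinite by force+
  then obtain x y where xy: "x \<in> I" "y \<in> I" "x \<noteq> y"
    using card_le_Suc0_iff_eq by blast
  show thesis
  proof
    show "\<not> complete_graph V E"
      using xy I(1) \<open>I \<subseteq> V\<close> unfolding independent_set_def complete_graph_def by blast
    have "num_components I E = card I"
      using I(1) unfolding independent_set_def by (intro num_components_edgeless) blast
    then show components: "num_components (V - (V - I)) E = indep_number V E"
      using \<open>V - (V - I) = I\<close> I(2) by simp
    show sep: "V - I \<in> separating_sets V E"
      using xy \<open>I \<subseteq> V\<close> components \<open>2 \<le> indep_number V E\<close>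
      unfolding separating_sets_def by auto
    show "card V = card (V - I) + indep_number V E"
      using card_split_separating[OF G sep] \<open>V - (V - I) = I\<close> I(2) by simp
  qed
qed

lemma one_tough_if_indep_number_le_half:
  assumes G: "simple_graph V E" and free: "K2_kK1_free k V E" and conn: "k_connected k V E"
    and alpha: "real (indep_number V E) \<le> real (card V) / 2"
  shows "1 \<le> toughness V E"
proof (cases "complete_graph V E")
  case True
  then show ?thesis by (simp add: toughness_def)
next
  case False
  have "num_components (V - S) E \<le> card S" if S: "S \<in> separating_sets V E" for S
  proof (rule ccontr)
    assume "\<not> num_components (V - S) E \<le> card S"
    then have "k < num_components (V - S) E"
      using k_connected_le_card_separating[OF conn S] by linarith
    then show False
      using separating_set_with_many_components[OF G free S] card_split_separating[OF G S]
        \<open>\<not> num_components (V - S) E \<le> card S\<close> alpha by linarith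
  qed
  then show ?thesis using toughness_ge_iff[OF G False, of 1] by (simp add: one_ereal_def)
qed

lemma tough_gt_one_if_indep_number_less_half:
  assumes G: "simple_graph V E" and free: "K2_kK1_free k V E"
    and conn: "k_connected (k + 1) V E"
    and alpha: "real (indep_number V E) < real (card V) / 2"
  shows "1 < toughness V E"
proof (cases "complete_graph V E")
  case True
  then show ?thesis by (simp add: toughness_def)
next
  case False
  have "num_components (V - S) E < card S" if S: "S \<in> separating_sets V E" for S
  proof (rule ccontr)
    assume "\<not> num_components (V - S) E < card S"
    then have "k < num_components (V - S) E"
      using k_connected_le_card_separating[OF conn S] by linarith
    then show False
      using separating_set_with_many_components[OF G free S] card_split_separating[OF G S]
        \<open>\<not> num_components (V - S) E < card S\<close> alpha by linarith
  qed
  then show ?thesis using toughness_gt_iff[OF G False, of 1] by (simp add: one_ereal_def)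
qed

lemma indep_number_le_half_if_one_tough:
  assumes G: "simple_graph V E" and "2 \<le> card V" and tough: "1 \<le> toughness V E"
  shows "real (indep_number V E) \<le> real (card V) / 2"
proof (cases "2 \<le> indep_number V E")
  case True
  then obtain S where S: "\<not> complete_graph V E" "S \<in> separating_sets V E"
    "num_components (V - S) E = indep_number V E" "card V = card S + indep_number V E"
    by (rule obtain_separating_set_of_indep_number[OF G])
  have "indep_number V E \<le> card S"
    using tough S toughness_ge_iff[OF G S(1), of 1] by (fastforce simp: one_ereal_def)
  with S(4) show ?thesis by linarith
qed (use \<open>2 \<le> card V\<close> in linarith)

lemma indep_number_less_half_if_tough_gt_one:
  assumes G: "simple_graph V E" and "3 \<le> card V" and tough: "1 < toughness V E"
  shows "real (indep_number V E) < real (card V) / 2"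
proof (cases "2 \<le> indep_number V E")
  case True
  then obtain S where S: "\<not> complete_graph V E" "S \<in> separating_sets V E"
    "num_components (V - S) E = indep_number V E" "card V = card S + indep_number V E"
    by (rule obtain_separating_set_of_indep_number[OF G])
  have "indep_number V E < card S"
    using tough S toughness_gt_iff[OF G S(1), of 1] by (fastforce simp: one_ereal_def)
  with S(4) show ?thesis by linarith
qed (use \<open>3 \<le> card V\<close> in linarith)

theorem mainTheorem4:
  fixes V :: "'a set" and E :: "'a \<Rightarrow> 'a \<Rightarrow> bool" and k :: nat
  assumes "k \<ge> 2" and "simple_graph V E" and "K2_kK1_free k V E"
  shows "(k_connected k V E \<longrightarrow>
            (real (indep_number V E) \<le> real (card V) / 2 \<longleftrightarrow> toughness V E \<ge> 1))
       \<and> (k_connected (k + 1) V E \<longrightarrow>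
            (real (indep_number V E) < real (card V) / 2 \<longleftrightarrow> toughness V E > 1))"
proof (intro conjI impI iffI)
  assume "k_connected k V E"
  then have "2 \<le> card V" using \<open>k \<ge> 2\<close> by (simp add: k_connected_def)
  show "1 \<le> toughness V E" if "real (indep_number V E) \<le> real (card V) / 2"
    using one_tough_if_indep_number_le_half assms(2,3) \<open>k_connected k V E\<close> that .
  show "real (indep_number V E) \<le> real (card V) / 2" if "1 \<le> toughness V E"
    using indep_number_le_half_if_one_tough assms(2) \<open>2 \<le> card V\<close> that .
next
  assume "k_connected (k + 1) V E"
  then have "3 \<le> card V" using \<open>k \<ge> 2\<close> by (simp add: k_connected_def)
  show "1 < toughness V E" if "real (indep_number V E) < real (card V) / 2"
    using tough_gt_one_if_indep_number_less_half assms(2,3) \<open>k_connected (k + 1) V E\<close> that .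
  show "real (indep_number V E) < real (card V) / 2" if "1 < toughness V E"
    using indep_number_less_half_if_tough_gt_one assms(2) \<open>3 \<le> card V\<close> that .
qed

end
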